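(* Let $f(x)=(1-x)^\alpha$ or $f(x)=(1+x)^\alpha$, where $\operatorname{Re}(\alpha)>-\tfrac12$ and $\alpha$ is not an integer. Then for $\operatorname{Re}(\lambda)>-\tfrac12$ and $\operatorname{Re}(\lambda+\alpha)>-\tfrac12$, the Gegenbauer coefficients of $f$ are, for all $n\ge0$, \[ a_n^\lambda=\mu_n\,\frac{2^{4\lambda+\alpha-1}\Gamma(\lambda)^2\Gamma(\alpha+\lambda+\frac12)\Gamma(\lambda+\frac12)\Gamma(\alpha+1)(n+\lambda)}{\pi\,\Gamma(2\lambda)\Gamma(\alpha-n+1)\Gamma(\alpha+2\lambda+n+1)}, \] where $\mu_n=(-1)^n$ for $f(x)=(1-x)^\alpha$ and $\mu_n=1$ for $f(x)=(1+x)^\alpha$.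
   Context: $C_n^{(\lambda)}$ is the Gegenbauer polynomial normalized by $C_n^{(\lambda)}(1)=\Gamma(n+2\lambda)/(n!\,\Gamma(2\lambda))$ ($\lambda\ne0$), orthogonal on $[-1,1]$ with weight $(1-x^2)^{\lambda-1/2}$, with $h_n^{(\lambda)}=\frac{2^{1-2\lambda}\pi}{\Gamma(\lambda)^2}\frac{\Gamma(n+2\lambda)}{\Gamma(n+1)(n+\lambda)}$; the Gegenbauer coefficients are $a_n^{\lambda}=\frac{1}{h_n^{(\lambda)}}\int_{-1}^1(1-x^2)^{\lambda-1/2}f(x)C_n^{(\lambda)}(x)\,dx$. *)

theory Defs
  imports "HOL-Analysis.Analysis"
begin

text \<open>Gegenbauer polynomial with complex parameter l (l \<noteq> 0), explicit standard formula,
  normalized so that C_n(1) = Gamma(n+2l)/(n! Gamma(2l)).\<close>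
definition gegenbauer :: "complex \<Rightarrow> nat \<Rightarrow> real \<Rightarrow> complex" where
  "gegenbauer l n x =
     (\<Sum>k\<le>n div 2. (-1)^k * pochhammer l (n - k) / (fact k * fact (n - 2*k))
                     * (2 * complex_of_real x) ^ (n - 2*k))"

definition gegenbauer_h :: "complex \<Rightarrow> nat \<Rightarrow> complex" where
  "gegenbauer_h l n =
     (2 powr (1 - 2*l)) * complex_of_real pi / (Gamma l)^2
     * Gamma (of_nat n + 2*l) / (Gamma (of_nat n + 1) * (of_nat n + l))"

definition gegenbauer_coeff :: "complex \<Rightarrow> (real \<Rightarrow> complex) \<Rightarrow> nat \<Rightarrow> complex" where
  "gegenbauer_coeff l f n =
     integral {-1..1} (\<lambda>x. complex_of_real (1 - x^2) powr (l - 1/2) * f x * gegenbauer l n x)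
     / gegenbauer_h l n"

end

theory Submission
  imports Defs
begin

text \<open>
  Put w_{l,a}(x) = (1 - x)^(l - 1/2) (1 + x)^(l + a - 1/2). The integrand defining the coefficients
  of (1 + x)^a is w_{l,a} C_n^l, and the case (1 - x)^a reduces to it by x -> -x and the parity
  of C_n^l. The moments I_n(l, a) = int_{-1}^{1} w_{l,a} C_n^l satisfy
  I_{n+1}(l, a) = 2 l a / ((n + 1)(n + 1 + 2 l)) I_n(l + 1, a - 1): the derivative of
  (1 - x)^(l + 1/2) (1 + x)^(l + a + 1/2) C_n^(l+1) is w_{l,a} times
  (1 - x^2) C_n^(l+1)' - (2 l + 1) x C_n^(l+1) = -(n + 1)(n + 1 + 2 l)/(2 l) C_{n+1}^l,
  plus a w_{l+1,a-1} C_n^(l+1), and it vanishes at x = -1 and x = 1. Finally I_0 is a Beta integral.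
  The library evaluates the Beta integral only for real parameters; for complex ones it follows by
  Euler's argument, from the shift relation B(a, b) b = B(a, b + 1) (a + b), the substitution
  t = s/N, dominated convergence towards the Gamma integral, and Gauss's product for Gamma.
\<close>

lemma norm_of_real_powr: "x \<ge> 0 \<Longrightarrow> norm (complex_of_real x powr z) = x powr Re z"
  by (simp add: norm_powr_real_powr)

lemma of_real_mult_powr:
  "x \<ge> 0 \<Longrightarrow> y \<ge> 0 \<Longrightarrow> complex_of_real (x * y) powr z = of_real x powr z * of_real y powr z"
  by (simp add: powr_times_real)

lemma of_real_divide_powr:
  assumes "x \<ge> 0" "y > 0"
  shows "complex_of_real (x / y) powr z = of_real x powr z / of_real y powr z"
proof -
  have "complex_of_real x powr z = of_real (x / y) powr z * of_real y powr z"
    using assms of_real_mult_powr[of "x / y" y z] by simp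
  then show ?thesis using assms by simp
qed

lemma powr_conv_powr_minus_one: "(w :: complex) \<noteq> 0 \<Longrightarrow> w powr a = w powr (a - 1) * w"
  using powr_add[of w "a - 1" 1] by simp

lemma of_nat_plus_nonzero: "Re z > -1 \<Longrightarrow> z \<noteq> 0 \<Longrightarrow> of_nat n + z \<noteq> 0"
  by (cases n) (auto simp: complex_eq_iff)

lemma not_nonpos_Int_if_Re_gt_minus_one:
  assumes "Re z > -1" "z \<noteq> 0"
  shows "z \<notin> \<int>\<^sub>\<le>\<^sub>0"
proof
  assume "z \<in> \<int>\<^sub>\<le>\<^sub>0"
  then obtain k where "z = of_int k" "k \<le> 0" by (auto elim!: nonpos_Ints_cases)
  with assms show False by simp
qed

lemma not_nonpos_Int_if_Re_pos: "Re z > 0 \<Longrightarrow> z \<notin> \<int>\<^sub>\<le>\<^sub>0"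
  by (rule not_nonpos_Int_if_Re_gt_minus_one) auto

lemma pochhammer_nonzero_if_Re_pos: "Re z > 0 \<Longrightarrow> pochhammer z n \<noteq> 0"
  by (auto simp: pochhammer_eq_0_iff)

section \<open>The Beta integral for complex parameters\<close>

definition beta_kernel :: "complex \<Rightarrow> complex \<Rightarrow> real \<Rightarrow> complex" where
  "beta_kernel a b t = of_real t powr (a - 1) * of_real (1 - t) powr (b - 1)"

lemma integrable_beta_kernel:
  assumes "Re a > 0" "Re b > 0"
  shows "beta_kernel a b integrable_on {0..1}"
proof -
  have "beta_kernel a b absolutely_integrable_on {0<..<1}"
  proof (rule measurable_bounded_by_integrable_imp_absolutely_integrable)
    show "beta_kernel a b \<in> borel_measurable (lebesgue_on {0<..<1})"
      unfolding beta_kernel_def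
      by (intro continuous_imp_measurable_on_sets_lebesgue continuous_intros) (auto simp: nonpos_Reals_def)
    show "(\<lambda>t. t powr (Re a - 1) * (1 - t) powr (Re b - 1)) integrable_on {0<..<1}"
      using integrable_Beta'[of "Re a" "Re b"] assms by (simp add: integrable_on_open_interval_real)
    fix t :: real assume "t \<in> {0<..<1}"
    then show "norm (beta_kernel a b t) \<le> t powr (Re a - 1) * (1 - t) powr (Re b - 1)"
      using norm_of_real_powr[of "1 - t"] by (simp add: beta_kernel_def norm_mult norm_of_real_powr)
  qed simp
  then have "beta_kernel a b integrable_on {0<..<1}"
    using set_lebesgue_integral_eq_integral(1) by blast
  then show ?thesis by (simp add: integrable_on_open_interval_real)
qed

lemma beta_kernel_integral_parts:
  assumes a: "Re a > 0" and b: "Re b > 0"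
  shows "a * integral {0..1} (beta_kernel a (b + 1)) = b * integral {0..1} (beta_kernel (a + 1) b)"
proof -
  define F where "F = (\<lambda>t::real. complex_of_real t powr a * complex_of_real (1 - t) powr b)"
  have "((\<lambda>t. a * beta_kernel a (b + 1) t - b * beta_kernel (a + 1) b t) has_integral (F 1 - F 0)) {0..1}"
  proof (rule fundamental_theorem_of_calculus_interior)
    show "continuous_on {0..1} F" unfolding F_def using a b
      by (intro continuous_intros) auto
    fix t :: real assume t: "t \<in> {0<..<1}"
    have "((\<lambda>z. z powr a * (1 - z) powr b) has_field_derivative
            (a * of_real t powr (a - 1) * of_real (1 - t) powr b
             - b * of_real t powr a * of_real (1 - t) powr (b - 1))) (at (complex_of_real t))"
      using t by (auto intro!: derivative_eq_intros simp: complex_nonpos_Reals_iff)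
    from has_vector_derivative_real_field[OF this, of UNIV]
    show "(F has_vector_derivative (a * beta_kernel a (b + 1) t - b * beta_kernel (a + 1) b t)) (at t)"
      unfolding F_def beta_kernel_def by (simp add: mult.assoc)
  qed simp
  moreover have "F 1 = 0" "F 0 = 0" using a b by (auto simp: F_def)
  ultimately have vanish: "((\<lambda>t. a * beta_kernel a (b + 1) t - b * beta_kernel (a + 1) b t) has_integral 0) {0..1}"
    by simp
  have "((\<lambda>t. a * beta_kernel a (b + 1) t - b * beta_kernel (a + 1) b t) has_integral
      a * integral {0..1} (beta_kernel a (b + 1)) - b * integral {0..1} (beta_kernel (a + 1) b)) {0..1}"
    using a b by (intro has_integral_diff has_integral_mult_right integrable_integral integrable_beta_kernel) auto
  from has_integral_unique[OF vanish this] show ?thesis by simp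
qed

lemma beta_kernel_integral_split:
  assumes a: "Re a > 0" and b: "Re b > 0"
  shows "integral {0..1} (beta_kernel a b)
           = integral {0..1} (beta_kernel (a + 1) b) + integral {0..1} (beta_kernel a (b + 1))"
proof -
  have "((\<lambda>t. beta_kernel (a + 1) b t + beta_kernel a (b + 1) t) has_integral
          integral {0..1} (beta_kernel (a + 1) b) + integral {0..1} (beta_kernel a (b + 1))) {0..1}"
    using a b by (intro has_integral_add integrable_integral integrable_beta_kernel) auto
  then have "(beta_kernel a b has_integral
          integral {0..1} (beta_kernel (a + 1) b) + integral {0..1} (beta_kernel a (b + 1))) {0..1}"
  proof (rule has_integral_spike_finite[where S = "{0, 1}", rotated 2])
    fix t assume "t \<in> {0..1::real} - {0, 1}"
    then have t: "complex_of_real t powr a = of_real t powr (a - 1) * of_real t"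
      "(1 - complex_of_real t) powr b = (1 - of_real t) powr (b - 1) * (1 - of_real t)"
      by (auto intro: powr_conv_powr_minus_one)
    show "beta_kernel a b t = beta_kernel (a + 1) b t + beta_kernel a (b + 1) t"
      unfolding beta_kernel_def of_real_diff of_real_1 add_diff_cancel_right' t
      by (simp add: algebra_simps)
  qed simp
  then show ?thesis by (simp add: integral_unique)
qed

lemma beta_kernel_integral_shift:
  assumes "Re a > 0" "Re b > 0"
  shows "integral {0..1} (beta_kernel a b) * b = integral {0..1} (beta_kernel a (b + 1)) * (a + b)"
  using beta_kernel_integral_split[OF assms] beta_kernel_integral_parts[OF assms]
  by (simp add: algebra_simps)

lemma beta_kernel_integral_pochhammer:
  assumes a: "Re a > 0" and b: "Re b > 0"
  shows "integral {0..1} (beta_kernel a b) * pochhammer b N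
           = integral {0..1} (beta_kernel a (b + of_nat N)) * pochhammer (a + b) N"
proof (induction N)
  case (Suc N)
  have "integral {0..1} (beta_kernel a b) * pochhammer b (Suc N)
        = (integral {0..1} (beta_kernel a b) * pochhammer b N) * (b + of_nat N)"
    by (simp add: pochhammer_Suc)
  also have "\<dots> = integral {0..1} (beta_kernel a (b + of_nat N)) * (b + of_nat N) * pochhammer (a + b) N"
    using Suc by simp
  also have "\<dots> = integral {0..1} (beta_kernel a (b + of_nat (Suc N))) * ((a + b + of_nat N) * pochhammer (a + b) N)"
    using beta_kernel_integral_shift[of a "b + of_nat N"] a b by (simp add: add_ac)
  also have "\<dots> = integral {0..1} (beta_kernel a (b + of_nat (Suc N))) * pochhammer (a + b) (Suc N)"
    by (simp add: pochhammer_Suc)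
  finally show ?case .
qed simp

lemma has_integral_beta_kernel_rescaled:
  assumes a: "Re a > 0" and c: "Re c > 0" and N: "N > 0"
  shows "((\<lambda>s. of_real s powr (a - 1) * of_real (1 - s / real N) powr (c - 1)) has_integral
           of_nat N powr a * integral {0..1} (beta_kernel a c)) {0..real N}"
proof -
  have "(beta_kernel a c has_integral integral {0..1} (beta_kernel a c)) (cbox 0 1)"
    using integrable_beta_kernel[OF a c] by (simp add: integrable_integral)
  from has_integral_affinity[OF this, of "1 / real N" 0] N
  have "((\<lambda>s. beta_kernel a c (s / real N)) has_integral real N *\<^sub>R integral {0..1} (beta_kernel a c))
          ((\<lambda>s. real N * s) ` {0..1})" by simp
  also have "(\<lambda>s. real N * s) ` {0..1} = {0..real N}" using N by (simp add: image_mult_atLeastAtMost)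
  finally have "((\<lambda>s. of_nat N powr (a - 1) * beta_kernel a c (s / real N)) has_integral
          of_nat N powr (a - 1) * (real N *\<^sub>R integral {0..1} (beta_kernel a c))) {0..real N}"
    by (rule has_integral_mult_right)
  also have "of_nat N powr (a - 1) * (real N *\<^sub>R integral {0..1} (beta_kernel a c)) =
             of_nat N powr a * integral {0..1} (beta_kernel a c)"
    using N powr_conv_powr_minus_one[of "of_nat N" a] by (simp add: scaleR_conv_of_real)
  finally show ?thesis
  proof (rule has_integral_spike_finite[where S = "{0}", rotated 2])
    fix s assume "s \<in> {0..real N} - {0}"
    then show "of_real s powr (a - 1) * of_real (1 - s / real N) powr (c - 1) =
               of_nat N powr (a - 1) * beta_kernel a c (s / real N)"
      using N of_real_divide_powr[of s "real N" "a - 1"] by (simp add: beta_kernel_def)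
  qed simp
qed

lemma one_minus_divide_powr_le_exp:
  fixes s \<beta> :: real
  assumes s: "0 \<le> s" "s \<le> real N" and N: "N \<ge> 2" and \<beta>: "\<beta> > 0"
  shows "(1 - s / real N) powr (\<beta> + real N - 1) \<le> exp (- s / 2)"
proof (cases "s = real N")
  case False
  define u where "u = 1 - s / real N"
  have u: "u > 0" using s False N unfolding u_def by (simp add: field_simps)
  have "ln u \<le> - s / real N" using ln_le_minus_one[OF u] by (simp add: u_def)
  moreover have "- s / real N \<le> 0" using s N by simp
  ultimately have "(\<beta> + real N - 1) * ln u \<le> (real N / 2) * (- s / real N)"
    using N \<beta> by (intro order.trans[OF mult_right_mono_neg mult_left_mono]) auto
  also have "\<dots> = - s / 2" using N by simp
  finally show ?thesis using u by (simp add: powr_def u_def[symmetric])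
qed simp

lemma norm_rescaled_beta_kernel_le:
  assumes s: "0 \<le> s" "s \<le> real N" and N: "N \<ge> 2" and b: "Re b > 0"
  shows "norm (complex_of_real s powr (a - 1) * of_real (1 - s / real N) powr (b + of_nat N - 1))
           \<le> s powr (Re a - 1) * exp (- s / 2)"
proof -
  have "0 \<le> 1 - s / real N" using s N by (simp add: field_simps)
  from norm_of_real_powr[OF this, of "b + of_nat N - 1"]
  have "norm (complex_of_real s powr (a - 1) * of_real (1 - s / real N) powr (b + of_nat N - 1))
        = s powr (Re a - 1) * (1 - s / real N) powr (Re b + real N - 1)"
    using s by (simp only: norm_mult norm_of_real_powr) simp
  also have "\<dots> \<le> s powr (Re a - 1) * exp (- s / 2)"
    using s N b by (intro mult_left_mono one_minus_divide_powr_le_exp) auto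
  finally show ?thesis .
qed

lemma rescaled_beta_kernel_tendsto:
  assumes s: "s \<ge> 0"
  shows "(\<lambda>N. complex_of_real s powr (a - 1) * of_real (1 - s / real N) powr (b + of_nat N - 1))
           \<longlonglongrightarrow> of_real s powr (a - 1) / of_real (exp s)"
proof -
  have ev: "eventually (\<lambda>N. of_real (1 - s / real N) powr (b + of_nat N - 1)
          = of_real (1 - s / real N) powr (b - 1) * of_real ((1 + (-s) / real N) ^ N)) sequentially"
    using eventually_gt_at_top[of "nat \<lceil>s\<rceil>"]
  proof eventually_elim
    case (elim N)
    then have pos: "1 - s / real N > 0" using s by (simp add: field_simps) linarith
    then have pow: "complex_of_real (1 - s / real N) powr of_nat N = of_real ((1 + (-s) / real N) ^ N)"
      by (subst powr_nat') auto
    have "b + of_nat N - 1 = (b - 1) + of_nat N" by simp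
    then show ?case by (simp only: powr_add pow)
  qed
  have "(\<lambda>N. complex_of_real s powr (a - 1) *
      (of_real (1 - s / real N) powr (b - 1) * of_real ((1 + (-s) / real N) ^ N)))
      \<longlonglongrightarrow> of_real s powr (a - 1) * (of_real (1 - 0) powr (b - 1) * of_real (exp (-s)))"
    by (intro tendsto_intros lim_const_over_n tendsto_exp_limit_sequentially)
       (auto simp: nonpos_Reals_def)
  then have "(\<lambda>N. complex_of_real s powr (a - 1) * of_real (1 - s / real N) powr (b + of_nat N - 1))
      \<longlonglongrightarrow> of_real s powr (a - 1) * (of_real (1 - 0) powr (b - 1) * of_real (exp (-s)))"
    by (rule Lim_transform_eventually) (rule eventually_mono[OF ev], simp)
  then show ?thesis by (simp add: exp_minus divide_inverse)
qed

text \<open>The integrands are dominated by \<open>s\<^bsup>Re a - 1\<^esup> e\<^bsup>-s/2\<^esup>\<close> only once \<open>N \<ge> 2\<close>, hence the shift by 2.\<close>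

lemma beta_kernel_integral_asymptotic:
  assumes a: "Re a > 0" and b: "Re b > 0"
  shows "(\<lambda>k. of_nat (k + 2) powr a * integral {0..1} (beta_kernel a (b + of_nat (k + 2)))) \<longlonglongrightarrow> Gamma a"
proof -
  define f where "f k s = (if s \<in> {0..real (k + 2)} then
      complex_of_real s powr (a - 1) * of_real (1 - s / real (k + 2)) powr (b + of_nat (k + 2) - 1) else 0)"
    for k s
  define h where "h s = norm (complex_of_real s powr (a - 1) / of_real (exp (1/2 * s)))" for s
  have f_integral: "(f k has_integral of_nat (k + 2) powr a * integral {0..1} (beta_kernel a (b + of_nat (k + 2)))) {0..}"
    for k
    using has_integral_beta_kernel_rescaled[of a "b + of_nat (k + 2)" "k + 2"] a b
    unfolding f_def by (subst has_integral_restrict) auto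
  have "(\<lambda>s. complex_of_real s powr (a - 1) / of_real (exp (1/2 * s))) absolutely_integrable_on {0<..}"
    using absolutely_integrable_Gamma_integral[OF a, of "1/2"] by simp
  then have "h integrable_on {0<..}" unfolding h_def absolutely_integrable_on_def by blast
  then have h_integrable: "h integrable_on {0..}"
    by (rule integrable_spike_set) (auto intro: negligible_subset[OF negligible_sing[of 0]])
  have dominated: "norm (f k s) \<le> h s" if "s \<in> {0..}" for k s
  proof (cases "s \<le> real (k + 2)")
    case True
    then have "norm (f k s) \<le> s powr (Re a - 1) * exp (- s / 2)"
      using norm_rescaled_beta_kernel_le[of s "k + 2" b a] True that b by (simp add: f_def)
    also have "\<dots> = h s" using that by (simp add: h_def norm_divide norm_of_real_powr exp_minus field_simps)
    finally show ?thesis .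
  qed (simp add: f_def h_def)
  have pointwise: "(\<lambda>k. f k s) \<longlonglongrightarrow> of_real s powr (a - 1) / of_real (exp s)" if "s \<in> {0..}" for s
  proof -
    have "eventually (\<lambda>k. complex_of_real s powr (a - 1) *
            of_real (1 - s / real (k + 2)) powr (b + of_nat (k + 2) - 1) = f k s) sequentially"
      using eventually_ge_at_top[of "nat \<lceil>s\<rceil>"]
    proof eventually_elim
      case (elim k)
      then have "s \<le> real (k + 2)" using real_nat_ceiling_ge[of s] by linarith
      with that show ?case by (simp add: f_def)
    qed
    with LIMSEQ_ignore_initial_segment[OF rescaled_beta_kernel_tendsto[of s a b], of 2] that
    show ?thesis by (auto elim: Lim_transform_eventually)
  qed
  have "(\<lambda>k. integral {0..} (f k)) \<longlonglongrightarrow> integral {0..} (\<lambda>s. of_real s powr (a - 1) / of_real (exp s))"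
    using f_integral by (intro dominated_convergence(2)[OF _ h_integrable dominated pointwise]) auto
  then show ?thesis
    using integral_unique[OF f_integral] integral_unique[OF Gamma_integral_complex[OF a]] by simp
qed

lemma Gamma_series'_ratio:
  fixes a b :: complex
  assumes "N > 0" "pochhammer b N \<noteq> 0" "pochhammer (a + b) N \<noteq> 0"
  shows "Gamma_series' b N / Gamma_series' (a + b) N = pochhammer (a + b) N / (pochhammer b N * of_nat N powr a)"
  using assms unfolding Gamma_series'_def
  by (simp add: powr_def Ln_of_nat field_simps exp_add distrib_right)

lemma has_integral_Beta_complex:
  assumes a: "Re a > 0" and b: "Re b > 0"
  shows "(beta_kernel a b has_integral Beta a b) {0..1}"
proof -
  define I where "I = integral {0..1} (beta_kernel a b)"
  have "Gamma (a + b) \<noteq> 0"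
    using a b not_nonpos_Int_if_Re_pos[of "a + b"] by (simp add: Gamma_eq_zero_iff)
  then have limit: "(\<lambda>k. of_nat (k + 2) powr a * integral {0..1} (beta_kernel a (b + of_nat (k + 2)))
               * (Gamma_series' b (k + 2) / Gamma_series' (a + b) (k + 2)))
             \<longlonglongrightarrow> Gamma a * (Gamma b / Gamma (a + b))"
    by (intro tendsto_mult tendsto_divide beta_kernel_integral_asymptotic a b
              LIMSEQ_ignore_initial_segment[OF Gamma_series'_LIMSEQ])
  have ratio_eq: "of_nat N powr a * integral {0..1} (beta_kernel a (b + of_nat N))
                   * (Gamma_series' b N / Gamma_series' (a + b) N) = I" if "N > 0" for N
  proof -
    have nonzero: "pochhammer b N \<noteq> 0" "pochhammer (a + b) N \<noteq> 0" "of_nat N powr a \<noteq> 0"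
      using a b that by (simp_all add: pochhammer_nonzero_if_Re_pos)
    with beta_kernel_integral_pochhammer[OF a b, of N] show ?thesis
      unfolding Gamma_series'_ratio[OF that nonzero(1,2)] I_def by (simp add: field_simps)
  qed
  have "(\<lambda>k. of_nat (k + 2) powr a * integral {0..1} (beta_kernel a (b + of_nat (k + 2)))
               * (Gamma_series' b (k + 2) / Gamma_series' (a + b) (k + 2))) = (\<lambda>k. I)"
    by (rule ext, rule ratio_eq) simp
  with limit have "I = Gamma a * (Gamma b / Gamma (a + b))"
    by (simp only: LIMSEQ_const_iff)
  then show ?thesis
    using integrable_integral[OF integrable_beta_kernel[OF a b]] by (simp add: I_def Beta_def)
qed

lemma has_integral_Beta_symmetric:
  assumes p: "Re p > -1" and q: "Re q > -1"
  shows "((\<lambda>x. (1 - complex_of_real x) powr p * (1 + complex_of_real x) powr q) has_integral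
           2 powr (p + q + 1) * Beta (p + 1) (q + 1)) {-1..1}"
proof -
  have "(beta_kernel (q + 1) (p + 1) has_integral Beta (q + 1) (p + 1)) (cbox 0 1)"
    using has_integral_Beta_complex[of "q + 1" "p + 1"] p q by simp
  from has_integral_affinity[OF this, of "1/2" "1/2"]
  have "((\<lambda>x. beta_kernel (q + 1) (p + 1) (x/2 + 1/2)) has_integral 2 *\<^sub>R Beta (q + 1) (p + 1))
          ((\<lambda>x. 2 * x - 1) ` {0..1})" by (simp add: field_simps)
  also have "(\<lambda>x. 2 * x - 1) ` {0..1::real} = {-1..1}"
    using image_affinity_atLeastAtMost_diff[of "2::real" 1 0 1] by simp
  finally have "((\<lambda>x. 2 powr (p + q) * beta_kernel (q + 1) (p + 1) (x/2 + 1/2)) has_integral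
                  2 powr (p + q) * (2 *\<^sub>R Beta (q + 1) (p + 1))) {-1..1}"
    by (rule has_integral_mult_right)
  also have "2 powr (p + q) * (2 *\<^sub>R Beta (q + 1) (p + 1)) = 2 powr (p + q + 1) * Beta (p + 1) (q + 1)"
    by (simp add: powr_add Beta_commute scaleR_conv_of_real)
  finally show ?thesis
  proof (rule has_integral_spike_finite[where S = "{-1, 1}", rotated 2])
    fix x assume "x \<in> {-1..1::real} - {-1, 1}"
    then have "1 + x > 0" "1 - x > 0" by auto
    moreover have "x/2 + 1/2 = (1 + x) / 2" "1 - (x/2 + 1/2) = (1 - x) / 2" by (simp_all add: field_simps)
    ultimately show "(1 - complex_of_real x) powr p * (1 + complex_of_real x) powr q
                       = 2 powr (p + q) * beta_kernel (q + 1) (p + 1) (x/2 + 1/2)"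
      unfolding beta_kernel_def using of_real_divide_powr[of "1 + x" 2 q] of_real_divide_powr[of "1 - x" 2 p]
      by (simp add: powr_add field_simps)
  qed simp
qed

section \<open>Gegenbauer polynomials of a complex variable\<close>

definition gegenbauer_poly_coeff :: "complex \<Rightarrow> nat \<Rightarrow> nat \<Rightarrow> complex" where
  "gegenbauer_poly_coeff l n k =
     (if 2 * k \<le> n then (-1) ^ k * pochhammer l (n - k) / (fact k * fact (n - 2 * k)) else 0)"

lemma gegenbauer_poly_coeff_shift:
  "l * gegenbauer_poly_coeff (l + 1) m k = of_nat (Suc m - 2 * k) * gegenbauer_poly_coeff l (Suc m) k"
proof (cases "2 * k \<le> m")
  case True
  then obtain j where "Suc m - 2 * k = Suc j" "Suc m - k = Suc (j + k)" "m - k = j + k" "m - 2 * k = j"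
    by (intro that[of "m - 2 * k"]) auto
  with True show ?thesis
    unfolding gegenbauer_poly_coeff_def by (simp add: pochhammer_rec field_simps del: of_nat_Suc)
qed (auto simp: gegenbauer_poly_coeff_def)

lemma gegenbauer_poly_coeff_shift_pred:
  assumes "k \<ge> 1"
  shows "l * gegenbauer_poly_coeff (l + 1) m (k - 1) * of_nat (Suc (Suc m) - 2 * k)
           = - of_nat k * (l + of_nat (Suc m - k)) * gegenbauer_poly_coeff l (Suc m) k"
proof (cases "2 * k \<le> Suc m")
  case True
  define p where "p = Suc m - k"
  define j where "j = Suc m - 2 * k"
  have "m - (k - 1) = p" "m - 2 * (k - 1) = Suc j" "2 * (k - 1) \<le> m"
    using assms True by (simp_all add: p_def j_def)
  then have b: "gegenbauer_poly_coeff (l + 1) m (k - 1)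
                  = (-1) ^ (k - 1) * pochhammer (l + 1) p / (fact (k - 1) * fact (Suc j))"
    by (simp add: gegenbauer_poly_coeff_def)
  have a: "gegenbauer_poly_coeff l (Suc m) k = (-1) ^ k * pochhammer l p / (fact k * fact j)"
    using True by (simp add: gegenbauer_poly_coeff_def p_def j_def)
  have fact_k: "fact k = (of_nat k * fact (k - 1) :: complex)"
    and sign_k: "(-1) ^ k = - ((-1) ^ (k - 1) :: complex)"
    using assms by (simp_all add: fact_reduce power_eq_if)
  have "Suc (Suc m) - 2 * k = Suc j" using True by (simp add: j_def)
  then have "l * gegenbauer_poly_coeff (l + 1) m (k - 1) * of_nat (Suc (Suc m) - 2 * k)
        = (-1) ^ (k - 1) * (l * pochhammer (l + 1) p) / (fact (k - 1) * fact j)"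
    unfolding b by (simp add: field_simps del: of_nat_Suc)
  also have "l * pochhammer (l + 1) p = (l + of_nat p) * pochhammer l p"
    using pochhammer_rec[of l p] by (simp add: pochhammer_Suc mult.commute)
  also have "(-1) ^ (k - 1) * ((l + of_nat p) * pochhammer l p) / (fact (k - 1) * fact j)
        = - of_nat k * (l + of_nat p) * gegenbauer_poly_coeff l (Suc m) k"
    using assms unfolding a fact_k sign_k by (simp add: field_simps)
  finally show ?thesis by (simp add: p_def)
next
  case False
  then have "Suc (Suc m) - 2 * k = 0" by simp
  with False show ?thesis by (simp add: gegenbauer_poly_coeff_def)
qed

lemma gegenbauer_poly_coeff_lowering:
  fixes l :: complex and m k :: nat
  defines "b \<equiv> gegenbauer_poly_coeff (l + 1) m"
  shows "4 * (if k = 0 then 0 else l * b (k - 1) * of_nat (Suc (Suc m) - 2 * k))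
           - l * b k * of_nat (m - 2 * k) - (2 * l + 1) * (l * b k)
         = - of_nat (Suc m) * (of_nat (Suc m) + 2 * l) * gegenbauer_poly_coeff l (Suc m) k"
proof -
  define a where "a = gegenbauer_poly_coeff l (Suc m) k"
  have "(if k = 0 then 0 else l * b (k - 1) * of_nat (Suc (Suc m) - 2 * k))
          = - of_nat k * (l + of_nat (Suc m - k)) * a"
    using gegenbauer_poly_coeff_shift_pred[of k l m] by (simp add: a_def b_def)
  moreover have "l * b k = of_nat (Suc m - 2 * k) * a"
    unfolding a_def b_def by (rule gegenbauer_poly_coeff_shift)
  ultimately have "4 * (if k = 0 then 0 else l * b (k - 1) * of_nat (Suc (Suc m) - 2 * k))
           - l * b k * of_nat (m - 2 * k) - (2 * l + 1) * (l * b k)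
         = 4 * (- of_nat k * (l + of_nat (Suc m - k)) * a)
           - of_nat (Suc m - 2 * k) * a * of_nat (m - 2 * k) - (2 * l + 1) * (of_nat (Suc m - 2 * k) * a)"
    by (simp only:)
  also have "\<dots> = - of_nat (Suc m) * (of_nat (Suc m) + 2 * l) * a"
  proof (cases "2 * k \<le> Suc m")
    case True
    then obtain j where j: "Suc m = j + 2 * k" by (metis add.commute le_add_diff_inverse)
    then have index: "Suc m - k = j + k" "Suc m - 2 * k = j" "m - 2 * k = j - 1" by simp_all
    have "of_nat j * of_nat (j - 1) = (of_nat j * of_nat j - of_nat j :: complex)"
      by (cases j) (simp_all add: algebra_simps)
    moreover have "y * z = y * y - y \<Longrightarrow>
        4 * (- x * (l + (y + x)) * a) - y * a * z - (2 * l + 1) * (y * a)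
          = - (y + 2 * x) * (y + 2 * x + 2 * l) * a" for x y z :: complex
      by algebra
    ultimately show ?thesis unfolding index unfolding j of_nat_add of_nat_mult of_nat_numeral by blast
  qed (simp add: a_def gegenbauer_poly_coeff_def)
  finally show ?thesis by (simp only: a_def)
qed

definition gegenbauer_poly :: "complex \<Rightarrow> nat \<Rightarrow> complex \<Rightarrow> complex" where
  "gegenbauer_poly l n z = (\<Sum>k\<le>n. gegenbauer_poly_coeff l n k * (2 * z) ^ (n - 2 * k))"

definition gegenbauer_poly_deriv :: "complex \<Rightarrow> nat \<Rightarrow> complex \<Rightarrow> complex" where
  "gegenbauer_poly_deriv l n z =
     (\<Sum>k\<le>n. gegenbauer_poly_coeff l n k * of_nat (n - 2 * k) * 2 * (2 * z) ^ (n - 2 * k - 1))"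

lemma gegenbauer_poly_extend_sum:
  "n \<le> M \<Longrightarrow> gegenbauer_poly l n z = (\<Sum>k\<le>M. gegenbauer_poly_coeff l n k * (2 * z) ^ (n - 2 * k))"
  unfolding gegenbauer_poly_def
  by (rule sum.mono_neutral_left) (auto simp: gegenbauer_poly_coeff_def)

lemma gegenbauer_poly_deriv_extend_sum:
  "n \<le> M \<Longrightarrow> gegenbauer_poly_deriv l n z =
     (\<Sum>k\<le>M. gegenbauer_poly_coeff l n k * of_nat (n - 2 * k) * 2 * (2 * z) ^ (n - 2 * k - 1))"
  unfolding gegenbauer_poly_deriv_def
  by (rule sum.mono_neutral_left) (auto simp: gegenbauer_poly_coeff_def)

lemma gegenbauer_eq_gegenbauer_poly: "gegenbauer l n x = gegenbauer_poly l n (of_real x)"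
proof -
  have "gegenbauer_poly l n (of_real x)
          = (\<Sum>k\<le>n div 2. gegenbauer_poly_coeff l n k * (2 * of_real x) ^ (n - 2 * k))"
    unfolding gegenbauer_poly_def by (rule sum.mono_neutral_right) (auto simp: gegenbauer_poly_coeff_def)
  also have "\<dots> = gegenbauer l n x"
    unfolding gegenbauer_def by (intro sum.cong refl) (auto simp: gegenbauer_poly_coeff_def)
  finally show ?thesis by simp
qed

lemma gegenbauer_poly_0 [simp]: "gegenbauer_poly l 0 z = 1"
  by (simp add: gegenbauer_poly_def gegenbauer_poly_coeff_def)

lemma continuous_on_gegenbauer_poly [continuous_intros]:
  "continuous_on S f \<Longrightarrow> continuous_on S (\<lambda>x. gegenbauer_poly l n (f x))"
  unfolding gegenbauer_poly_def by (intro continuous_intros)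

lemma has_field_derivative_gegenbauer_poly:
  "(gegenbauer_poly l n has_field_derivative gegenbauer_poly_deriv l n z) (at z)"
proof -
  have "((\<lambda>z. (2 * z) ^ j) has_field_derivative of_nat j * 2 * (2 * z) ^ (j - 1)) (at z)" for j
    using DERIV_power[OF DERIV_cmult_Id[of 2 z UNIV], of j] by (simp add: algebra_simps)
  then have "((\<lambda>z. \<Sum>k\<le>n. gegenbauer_poly_coeff l n k * (2 * z) ^ (n - 2 * k)) has_field_derivative
      (\<Sum>k\<le>n. gegenbauer_poly_coeff l n k * (of_nat (n - 2 * k) * 2 * (2 * z) ^ (n - 2 * k - 1)))) (at z)"
    by (intro DERIV_sum DERIV_cmult)
  then show ?thesis unfolding gegenbauer_poly_def [abs_def] gegenbauer_poly_deriv_def by (simp add: mult.assoc)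
qed

lemma gegenbauer_poly_minus: "gegenbauer_poly l n (- z) = (-1) ^ n * gegenbauer_poly l n z"
  unfolding gegenbauer_poly_def sum_distrib_left
proof (intro sum.cong refl)
  fix k
  show "gegenbauer_poly_coeff l n k * (2 * - z) ^ (n - 2 * k)
          = (-1) ^ n * (gegenbauer_poly_coeff l n k * (2 * z) ^ (n - 2 * k))"
  proof (cases "2 * k \<le> n")
    case True
    then obtain j where "n = j + 2 * k" by (metis add.commute le_add_diff_inverse)
    then show ?thesis by (simp add: power_minus' power_add power_mult)
  qed (simp add: gegenbauer_poly_coeff_def)
qed

lemma gegenbauer_poly_deriv_reindex:
  "2 * gegenbauer_poly_deriv l m z =
     (\<Sum>k\<le>Suc (Suc m). 4 * (if k = 0 then 0 else gegenbauer_poly_coeff l m (k - 1) * of_nat (Suc (Suc m) - 2 * k))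
                         * (2 * z) ^ (Suc m - 2 * k))"
proof -
  have "2 * gegenbauer_poly_deriv l m z
          = (\<Sum>k\<le>Suc m. 4 * (gegenbauer_poly_coeff l m k * of_nat (m - 2 * k)) * (2 * z) ^ (Suc m - 2 * Suc k))"
    unfolding gegenbauer_poly_deriv_extend_sum[of m "Suc m", OF le_SucI[OF order.refl]] sum_distrib_left
    by (intro sum.cong) simp_all
  also have "\<dots> = (\<Sum>k\<le>Suc (Suc m).
      4 * (if k = 0 then 0 else gegenbauer_poly_coeff l m (k - 1) * of_nat (Suc (Suc m) - 2 * k)) * (2 * z) ^ (Suc m - 2 * k))"
    by (subst sum.atMost_Suc_shift) simp
  finally show ?thesis .
qed

lemma gegenbauer_poly_deriv_times_square:
  "2 * z\<^sup>2 * gegenbauer_poly_deriv l m z =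
     (\<Sum>k\<le>Suc (Suc m). gegenbauer_poly_coeff l m k * of_nat (m - 2 * k) * (2 * z) ^ (Suc m - 2 * k))"
  unfolding gegenbauer_poly_deriv_extend_sum[of m "Suc (Suc m)", OF le_SucI[OF le_SucI[OF order.refl]]] sum_distrib_left
proof (intro sum.cong refl)
  fix k
  show "2 * z\<^sup>2 * (gegenbauer_poly_coeff l m k * of_nat (m - 2 * k) * 2 * (2 * z) ^ (m - 2 * k - 1))
          = gegenbauer_poly_coeff l m k * of_nat (m - 2 * k) * (2 * z) ^ (Suc m - 2 * k)"
  proof (cases "m - 2 * k")
    case (Suc j)
    then have "m - 2 * k - 1 = j" "Suc m - 2 * k = Suc (Suc j)" by auto
    with Suc show ?thesis by (simp add: algebra_simps power2_eq_square)
  qed simp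
qed

lemma gegenbauer_poly_times_linear:
  "2 * z * gegenbauer_poly l m z =
     (\<Sum>k\<le>Suc (Suc m). gegenbauer_poly_coeff l m k * (2 * z) ^ (Suc m - 2 * k))"
  unfolding gegenbauer_poly_extend_sum[of m "Suc (Suc m)", OF le_SucI[OF le_SucI[OF order.refl]]] sum_distrib_left
proof (intro sum.cong refl)
  fix k
  show "2 * z * (gegenbauer_poly_coeff l m k * (2 * z) ^ (m - 2 * k))
          = gegenbauer_poly_coeff l m k * (2 * z) ^ (Suc m - 2 * k)"
  proof (cases "2 * k \<le> m")
    case True
    then have "Suc m - 2 * k = Suc (m - 2 * k)" by simp
    then show ?thesis by (simp add: algebra_simps)
  qed (simp add: gegenbauer_poly_coeff_def)
qed

lemma gegenbauer_poly_lowering: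
  fixes l z :: complex
  shows "2 * l * ((1 - z\<^sup>2) * gegenbauer_poly_deriv (l + 1) m z - (2 * l + 1) * z * gegenbauer_poly (l + 1) m z)
           = - (of_nat (Suc m) * (of_nat (Suc m) + 2 * l)) * gegenbauer_poly l (Suc m) z"
proof -
  define b where "b = gegenbauer_poly_coeff (l + 1) m"
  have "2 * l * ((1 - z\<^sup>2) * gegenbauer_poly_deriv (l + 1) m z - (2 * l + 1) * z * gegenbauer_poly (l + 1) m z)
      = l * (2 * gegenbauer_poly_deriv (l + 1) m z) - l * (2 * z\<^sup>2 * gegenbauer_poly_deriv (l + 1) m z)
        - l * (2 * l + 1) * (2 * z * gegenbauer_poly (l + 1) m z)"
    by (simp add: algebra_simps)
  also have "\<dots> = (\<Sum>k\<le>Suc (Suc m). (4 * (if k = 0 then 0 else l * b (k - 1) * of_nat (Suc (Suc m) - 2 * k))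
                     - l * b k * of_nat (m - 2 * k) - (2 * l + 1) * (l * b k)) * (2 * z) ^ (Suc m - 2 * k))"
    unfolding gegenbauer_poly_deriv_reindex gegenbauer_poly_deriv_times_square gegenbauer_poly_times_linear
      sum_distrib_left sum_subtractf[symmetric] b_def
    by (intro sum.cong refl) (simp add: algebra_simps)
  also have "\<dots> = (\<Sum>k\<le>Suc (Suc m). - (of_nat (Suc m) * (of_nat (Suc m) + 2 * l))
                     * (gegenbauer_poly_coeff l (Suc m) k * (2 * z) ^ (Suc m - 2 * k)))"
    unfolding b_def gegenbauer_poly_coeff_lowering by (intro sum.cong refl) (simp add: algebra_simps)
  also have "\<dots> = - (of_nat (Suc m) * (of_nat (Suc m) + 2 * l)) * gegenbauer_poly l (Suc m) z"
    unfolding gegenbauer_poly_extend_sum[of "Suc m" "Suc (Suc m)", OF le_SucI[OF order.refl]] sum_distrib_left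
    by simp
  finally show ?thesis .
qed

section \<open>Integrals against the Gegenbauer weight\<close>

definition gegenbauer_weight :: "complex \<Rightarrow> complex \<Rightarrow> real \<Rightarrow> complex" where
  "gegenbauer_weight l \<alpha> x = (1 - complex_of_real x) powr (l - 1/2) * (1 + complex_of_real x) powr (l + \<alpha> - 1/2)"

definition gegenbauer_moment :: "nat \<Rightarrow> complex \<Rightarrow> complex \<Rightarrow> complex" where
  "gegenbauer_moment n l \<alpha> = 2 powr (2 * l + \<alpha>) * Gamma (l + 1/2) * Gamma (l + \<alpha> + 1/2)
      * pochhammer (2 * l) n * pochhammer (\<alpha> - of_nat n + 1) n / fact n * rGamma (\<alpha> + 2 * l + of_nat n + 1)"

lemma gegenbauer_moment_0:
  "gegenbauer_moment 0 l \<alpha> = 2 powr ((l - 1/2) + (l + \<alpha> - 1/2) + 1) * Beta (l - 1/2 + 1) (l + \<alpha> - 1/2 + 1)"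
proof -
  have exponents: "(l - 1/2) + (l + \<alpha> - 1/2) + 1 = 2 * l + \<alpha>" "l - 1/2 + 1 = l + 1/2"
    "l + \<alpha> - 1/2 + 1 = l + \<alpha> + 1/2" "l + 1/2 + (l + \<alpha> + 1/2) = \<alpha> + 2 * l + 1"
    by (simp_all add: field_simps)
  show ?thesis unfolding exponents(1-3) gegenbauer_moment_def Beta_altdef exponents(4) by simp
qed

lemma gegenbauer_moment_Suc:
  assumes l: "Re l > -1/2"
  shows "gegenbauer_moment (Suc m) l \<alpha>
           = 2 * l * \<alpha> / (of_nat (Suc m) * (of_nat (Suc m) + 2 * l)) * gegenbauer_moment m (l + 1) (\<alpha> - 1)"
proof -
  define N where "N = (of_nat (Suc m) :: complex)"
  define D where "D = N + 2 * l"
  have "Re D > 0" using l by (simp add: D_def N_def)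
  moreover have "N \<noteq> 0" unfolding N_def of_nat_eq_0_iff by simp
  ultimately have nonzero: "D \<noteq> 0" "N \<noteq> 0" by auto
  have "2 * (l + 1) + (\<alpha> - 1) = (2 * l + \<alpha>) + 1" "l + 1 + 1/2 = (l + 1/2) + 1"
    "l + 1 + (\<alpha> - 1) + 1/2 = l + \<alpha> + 1/2" "2 * (l + 1) = 2 * l + 2"
    "\<alpha> - 1 - of_nat m + 1 = \<alpha> - of_nat m" "\<alpha> - 1 + 2 * (l + 1) + of_nat m + 1 = \<alpha> + 2 * l + of_nat (Suc m) + 1"
    by (simp_all add: algebra_simps)
  moreover have "Gamma ((l + 1/2) + 1) = (l + 1/2) * Gamma (l + 1/2)"
    using l by (intro Gamma_plus1 not_nonpos_Int_if_Re_pos) simp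
  ultimately have shifted: "gegenbauer_moment m (l + 1) (\<alpha> - 1) = 2 * (l + 1/2) * 2 powr (2 * l + \<alpha>)
      * Gamma (l + 1/2) * Gamma (l + \<alpha> + 1/2) * pochhammer (2 * l + 2) m * pochhammer (\<alpha> - of_nat m) m
      / fact m * rGamma (\<alpha> + 2 * l + of_nat (Suc m) + 1)"
    unfolding gegenbauer_moment_def by (simp add: powr_add)
  have "pochhammer (2 * l) (Suc m) * D = pochhammer (2 * l) (Suc (Suc m))"
    by (simp add: pochhammer_Suc D_def N_def algebra_simps)
  also have "\<dots> = 2 * l * (2 * l + 1) * pochhammer (2 * l + 2) m"
    by (simp add: pochhammer_rec algebra_simps)
  finally have poch_2l: "pochhammer (2 * l) (Suc m) = 2 * l * (2 * l + 1) * pochhammer (2 * l + 2) m / D"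
    using nonzero by (simp add: field_simps)
  have poch_\<alpha>: "pochhammer (\<alpha> - of_nat (Suc m) + 1) (Suc m) = \<alpha> * pochhammer (\<alpha> - of_nat m) m"
    by (simp add: pochhammer_Suc algebra_simps)
  have fact_Suc_m: "fact (Suc m) = N * fact m" by (simp add: N_def)
  show ?thesis
    unfolding shifted unfolding gegenbauer_moment_def poch_2l poch_\<alpha> fact_Suc_m
    unfolding N_def[symmetric] D_def[symmetric]
    using nonzero by (simp add: field_simps)
qed

lemma has_vector_derivative_gegenbauer_weight_primitive:
  assumes x: "-1 < x" "x < 1"
  shows "((\<lambda>x. (1 - complex_of_real x) powr (l + 1/2) * (1 + complex_of_real x) powr (l + \<alpha> + 1/2)
            * gegenbauer_poly (l + 1) m (of_real x)) has_vector_derivative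
          gegenbauer_weight l \<alpha> x * ((1 - (complex_of_real x)\<^sup>2) * gegenbauer_poly_deriv (l + 1) m (of_real x)
            - (2 * l + 1) * of_real x * gegenbauer_poly (l + 1) m (of_real x))
          + \<alpha> * (gegenbauer_weight (l + 1) (\<alpha> - 1) x * gegenbauer_poly (l + 1) m (of_real x))) (at x)"
proof -
  define z where "z = complex_of_real x"
  have "1 - z \<noteq> 0" "1 + z \<noteq> 0" using x by (auto simp: z_def complex_eq_iff)
  then have split: "(1 - z) powr (l + 1/2) = (1 - z) powr (l - 1/2) * (1 - z)"
      "(1 + z) powr (l + \<alpha> + 1/2) = (1 + z) powr (l + \<alpha> - 1/2) * (1 + z)"
    using powr_conv_powr_minus_one[of "1 - z" "l + 1/2"] powr_conv_powr_minus_one[of "1 + z" "l + \<alpha> + 1/2"]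
    by (simp_all add: algebra_simps)
  have exponents: "l + 1 - 1/2 = l + 1/2" "l + 1 + (\<alpha> - 1) - 1/2 = l + \<alpha> - 1/2" by simp_all
  have "((\<lambda>z. (1 - z) powr (l + 1/2) * (1 + z) powr (l + \<alpha> + 1/2) * gegenbauer_poly (l + 1) m z)
      has_field_derivative
        - ((l + 1/2) * (1 - z) powr (l - 1/2)) * (1 + z) powr (l + \<alpha> + 1/2) * gegenbauer_poly (l + 1) m z
        + (1 - z) powr (l + 1/2) * ((l + \<alpha> + 1/2) * (1 + z) powr (l + \<alpha> - 1/2)) * gegenbauer_poly (l + 1) m z
        + (1 - z) powr (l + 1/2) * (1 + z) powr (l + \<alpha> + 1/2) * gegenbauer_poly_deriv (l + 1) m z) (at z)"
    using x unfolding z_def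
    by (auto intro!: derivative_eq_intros has_field_derivative_gegenbauer_poly
             simp: complex_nonpos_Reals_iff algebra_simps)
  also have "- ((l + 1/2) * (1 - z) powr (l - 1/2)) * (1 + z) powr (l + \<alpha> + 1/2) * gegenbauer_poly (l + 1) m z
        + (1 - z) powr (l + 1/2) * ((l + \<alpha> + 1/2) * (1 + z) powr (l + \<alpha> - 1/2)) * gegenbauer_poly (l + 1) m z
        + (1 - z) powr (l + 1/2) * (1 + z) powr (l + \<alpha> + 1/2) * gegenbauer_poly_deriv (l + 1) m z
      = gegenbauer_weight l \<alpha> x * ((1 - z\<^sup>2) * gegenbauer_poly_deriv (l + 1) m z
          - (2 * l + 1) * z * gegenbauer_poly (l + 1) m z)
        + \<alpha> * (gegenbauer_weight (l + 1) (\<alpha> - 1) x * gegenbauer_poly (l + 1) m z)"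
    unfolding gegenbauer_weight_def z_def[symmetric] exponents split
    by (simp add: algebra_simps power2_eq_square)
  finally show ?thesis
    using has_vector_derivative_real_field unfolding z_def by blast
qed

lemma has_integral_gegenbauer_weight_lowering:
  assumes l: "Re l > -1/2" and l\<alpha>: "Re (l + \<alpha>) > -1/2"
    and I: "((\<lambda>x. gegenbauer_weight (l + 1) (\<alpha> - 1) x * gegenbauer_poly (l + 1) m (of_real x)) has_integral I) {-1..1}"
  shows "((\<lambda>x. gegenbauer_weight l \<alpha> x * ((1 - (complex_of_real x)\<^sup>2) * gegenbauer_poly_deriv (l + 1) m (of_real x)
            - (2 * l + 1) * of_real x * gegenbauer_poly (l + 1) m (of_real x))) has_integral - \<alpha> * I) {-1..1}"
proof -
  define F where "F x = (1 - complex_of_real x) powr (l + 1/2) * (1 + complex_of_real x) powr (l + \<alpha> + 1/2)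
                        * gegenbauer_poly (l + 1) m (of_real x)" for x
  have "((\<lambda>x. gegenbauer_weight l \<alpha> x * ((1 - (complex_of_real x)\<^sup>2) * gegenbauer_poly_deriv (l + 1) m (of_real x)
            - (2 * l + 1) * of_real x * gegenbauer_poly (l + 1) m (of_real x))
          + \<alpha> * (gegenbauer_weight (l + 1) (\<alpha> - 1) x * gegenbauer_poly (l + 1) m (of_real x)))
          has_integral (F 1 - F (-1))) {-1..1}"
  proof (rule fundamental_theorem_of_calculus_interior)
    show "continuous_on {-1..1} F" unfolding F_def using l l\<alpha>
      by (intro continuous_intros) auto
  qed (auto simp: F_def intro!: has_vector_derivative_gegenbauer_weight_primitive)
  moreover have "F 1 = 0" "F (-1) = 0" using l l\<alpha> by (simp_all add: F_def)
  ultimately show ?thesis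
    using has_integral_diff[OF _ has_integral_mult_right[OF I, of \<alpha>]] by fastforce
qed

lemma has_integral_gegenbauer_weight_poly:
  assumes "Re l > -1/2" "Re (l + \<alpha>) > -1/2"
  shows "((\<lambda>x. gegenbauer_weight l \<alpha> x * gegenbauer_poly l n (of_real x)) has_integral gegenbauer_moment n l \<alpha>) {-1..1}"
  using assms
proof (induction n arbitrary: l \<alpha>)
  case 0
  show ?case
    unfolding gegenbauer_moment_0 gegenbauer_poly_0 mult_1_right gegenbauer_weight_def
    by (rule has_integral_Beta_symmetric) (use 0 in auto)
next
  case (Suc m)
  define c where "c = of_nat (Suc m) * (of_nat (Suc m) + 2 * l)"
  define Q where "Q x = (1 - (complex_of_real x)\<^sup>2) * gegenbauer_poly_deriv (l + 1) m (of_real x)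
                        - (2 * l + 1) * of_real x * gegenbauer_poly (l + 1) m (of_real x)" for x
  have "Re (of_nat (Suc m) + 2 * l) > 0" using Suc.prems by simp
  then have "c \<noteq> 0" by (auto simp: c_def complex_eq_iff)
  have "((\<lambda>x. gegenbauer_weight (l + 1) (\<alpha> - 1) x * gegenbauer_poly (l + 1) m (of_real x))
           has_integral gegenbauer_moment m (l + 1) (\<alpha> - 1)) {-1..1}"
    using Suc by simp
  from has_integral_gegenbauer_weight_lowering[OF Suc.prems this]
  have "((\<lambda>x. - 2 * l / c * (gegenbauer_weight l \<alpha> x * Q x)) has_integral
          - 2 * l / c * (- \<alpha> * gegenbauer_moment m (l + 1) (\<alpha> - 1))) {-1..1}"
    unfolding Q_def by (rule has_integral_mult_right)
  moreover have "- 2 * l / c * (gegenbauer_weight l \<alpha> x * Q x)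
                   = gegenbauer_weight l \<alpha> x * gegenbauer_poly l (Suc m) (of_real x)" for x
  proof -
    have lowered: "2 * l * Q x = - c * gegenbauer_poly l (Suc m) (of_real x)"
      using gegenbauer_poly_lowering[of l "of_real x" m] unfolding Q_def c_def by simp
    have "- 2 * l / c * (gegenbauer_weight l \<alpha> x * Q x) = - (gegenbauer_weight l \<alpha> x * (2 * l * Q x)) / c"
      by (simp add: algebra_simps)
    also have "\<dots> = gegenbauer_weight l \<alpha> x * gegenbauer_poly l (Suc m) (of_real x)"
      unfolding lowered using \<open>c \<noteq> 0\<close> by simp
    finally show ?thesis .
  qed
  moreover have "- 2 * l / c * (- \<alpha> * gegenbauer_moment m (l + 1) (\<alpha> - 1)) = gegenbauer_moment (Suc m) l \<alpha>"
    unfolding gegenbauer_moment_Suc[OF Suc.prems(1)] c_def by simp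
  ultimately show ?case by simp
qed

lemma gegenbauer_moment_div_gegenbauer_h:
  assumes \<alpha>: "\<alpha> \<notin> \<int>" and l0: "l \<noteq> 0" and l: "Re l > -1/2" and l\<alpha>: "Re (l + \<alpha>) > -1/2"
  shows "gegenbauer_moment n l \<alpha> / gegenbauer_h l n =
     2 powr (4*l + \<alpha> - 1) * (Gamma l)^2 * Gamma (\<alpha> + l + 1/2) * Gamma (l + 1/2)
              * Gamma (\<alpha> + 1) * (of_nat n + l)
              / (complex_of_real pi * Gamma (2*l) * Gamma (\<alpha> - of_nat n + 1)
                 * Gamma (\<alpha> + 2*l + of_nat n + 1))"
proof -
  have "2 * l \<noteq> 0" "of_nat n + 2 * l \<noteq> 0" using l l0 by (simp_all add: of_nat_plus_nonzero)
  with l l0 have "2 * l \<notin> \<int>\<^sub>\<le>\<^sub>0" "l \<notin> \<int>\<^sub>\<le>\<^sub>0" "of_nat n + 2 * l \<notin> \<int>\<^sub>\<le>\<^sub>0"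
    by (simp_all add: not_nonpos_Int_if_Re_gt_minus_one)
  moreover have "\<alpha> - of_nat n + 1 \<notin> \<int>\<^sub>\<le>\<^sub>0"
  proof
    assume "\<alpha> - of_nat n + 1 \<in> \<int>\<^sub>\<le>\<^sub>0"
    then have "\<alpha> - of_nat n + 1 \<in> \<int>" using nonpos_Ints_subset_Ints by blast
    then have "\<alpha> - of_nat n + 1 + (of_nat n - 1) \<in> \<int>" by (intro Ints_add) auto
    with \<alpha> show False by simp
  qed
  moreover have "\<alpha> + 2 * l + of_nat n + 1 \<notin> \<int>\<^sub>\<le>\<^sub>0"
    using l l\<alpha> by (intro not_nonpos_Int_if_Re_pos) simp
  ultimately have nonzero: "Gamma (2 * l) \<noteq> 0" "Gamma l \<noteq> 0" "Gamma (of_nat n + 2 * l) \<noteq> 0"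
      "Gamma (\<alpha> - of_nat n + 1) \<noteq> 0" "Gamma (\<alpha> + 2 * l + of_nat n + 1) \<noteq> 0" "of_nat n + l \<noteq> 0"
    using l l0 by (simp_all add: Gamma_eq_zero_iff of_nat_plus_nonzero)
  have poch_2l: "pochhammer (2 * l) n = Gamma (of_nat n + 2 * l) / Gamma (2 * l)"
    using pochhammer_Gamma[OF \<open>2 * l \<notin> \<int>\<^sub>\<le>\<^sub>0\<close>, of n] by (simp add: add_ac)
  have poch_\<alpha>: "pochhammer (\<alpha> - of_nat n + 1) n = Gamma (\<alpha> + 1) / Gamma (\<alpha> - of_nat n + 1)"
    using pochhammer_Gamma[OF \<open>\<alpha> - of_nat n + 1 \<notin> \<int>\<^sub>\<le>\<^sub>0\<close>, of n] by simp
  have two_powr: "(2 :: complex) powr (4 * l + \<alpha> - 1) = 2 powr (2 * l + \<alpha>) * 2 powr (2 * l - 1)"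
    by (simp flip: powr_add add: algebra_simps)
  have two_powr_inverse: "(2 :: complex) powr (1 - 2 * l) = inverse (2 powr (2 * l - 1))"
    by (simp flip: powr_minus)
  have Gamma_fact': "Gamma (of_nat n + 1) = fact n"
    using Gamma_fact[of n] by (simp add: add_ac)
  show ?thesis
    unfolding gegenbauer_moment_def gegenbauer_h_def rGamma_inverse_Gamma
      poch_2l poch_\<alpha> two_powr two_powr_inverse Gamma_fact'
    using nonzero by (simp add: field_simps)
qed

lemma gegenbauer_integrand_one_plus:
  assumes "-1 < x" "x < 1"
  shows "complex_of_real (1 - x\<^sup>2) powr (l - 1/2) * complex_of_real (1 + x) powr \<alpha> * gegenbauer l n x
           = gegenbauer_weight l \<alpha> x * gegenbauer_poly l n (of_real x)"
proof -
  have "complex_of_real (1 - x\<^sup>2) powr (l - 1/2) = of_real (1 - x) powr (l - 1/2) * of_real (1 + x) powr (l - 1/2)"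
    using assms of_real_mult_powr[of "1 - x" "1 + x" "l - 1/2"] by (simp add: power2_eq_square algebra_simps)
  moreover have "complex_of_real (1 + x) powr (l - 1/2) * of_real (1 + x) powr \<alpha> = of_real (1 + x) powr (l + \<alpha> - 1/2)"
    by (simp flip: powr_add add: algebra_simps)
  ultimately show ?thesis
    by (simp add: gegenbauer_weight_def gegenbauer_eq_gegenbauer_poly mult_ac)
qed

lemma gegenbauer_integrand_one_minus:
  assumes "-1 < x" "x < 1"
  shows "complex_of_real (1 - x\<^sup>2) powr (l - 1/2) * complex_of_real (1 - x) powr \<alpha> * gegenbauer l n x
           = (-1) ^ n * (gegenbauer_weight l \<alpha> (- x) * gegenbauer_poly l n (of_real (- x)))"
proof -
  have "complex_of_real (1 - x\<^sup>2) powr (l - 1/2) = of_real (1 - x) powr (l - 1/2) * of_real (1 + x) powr (l - 1/2)"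
    using assms of_real_mult_powr[of "1 - x" "1 + x" "l - 1/2"] by (simp add: power2_eq_square algebra_simps)
  moreover have "complex_of_real (1 - x) powr (l - 1/2) * of_real (1 - x) powr \<alpha> = of_real (1 - x) powr (l + \<alpha> - 1/2)"
    by (simp flip: powr_add add: algebra_simps)
  ultimately show ?thesis
    by (simp add: gegenbauer_weight_def gegenbauer_eq_gegenbauer_poly gegenbauer_poly_minus mult_ac)
qed

lemma gegenbauer_coeff_one_plus_powr:
  assumes "Re l > -1/2" "Re (l + \<alpha>) > -1/2"
  shows "gegenbauer_coeff l (\<lambda>x. complex_of_real (1 + x) powr \<alpha>) n = gegenbauer_moment n l \<alpha> / gegenbauer_h l n"
proof -
  have "((\<lambda>x. complex_of_real (1 - x\<^sup>2) powr (l - 1/2) * complex_of_real (1 + x) powr \<alpha> * gegenbauer l n x)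
          has_integral gegenbauer_moment n l \<alpha>) {-1..1}"
    using has_integral_gegenbauer_weight_poly[OF assms, of n]
  proof (rule has_integral_spike_finite[where S = "{-1, 1}", rotated 2])
    fix x assume "x \<in> {-1..1::real} - {-1, 1}"
    then show "complex_of_real (1 - x\<^sup>2) powr (l - 1/2) * complex_of_real (1 + x) powr \<alpha> * gegenbauer l n x
                 = gegenbauer_weight l \<alpha> x * gegenbauer_poly l n (of_real x)"
      by (intro gegenbauer_integrand_one_plus) auto
  qed simp
  then show ?thesis unfolding gegenbauer_coeff_def by (simp add: integral_unique)
qed

lemma gegenbauer_coeff_one_minus_powr:
  assumes "Re l > -1/2" "Re (l + \<alpha>) > -1/2"
  shows "gegenbauer_coeff l (\<lambda>x. complex_of_real (1 - x) powr \<alpha>) n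
           = (-1) ^ n * (gegenbauer_moment n l \<alpha> / gegenbauer_h l n)"
proof -
  have "((\<lambda>x. gegenbauer_weight l \<alpha> (- x) * gegenbauer_poly l n (of_real (- x))) has_integral gegenbauer_moment n l \<alpha>) {-1..1}"
    using has_integral_reflect_real[THEN iffD2, OF has_integral_gegenbauer_weight_poly[OF assms, of n]]
    by simp
  from has_integral_mult_right[OF this, of "(-1) ^ n"]
  have "((\<lambda>x. complex_of_real (1 - x\<^sup>2) powr (l - 1/2) * complex_of_real (1 - x) powr \<alpha> * gegenbauer l n x)
          has_integral (-1) ^ n * gegenbauer_moment n l \<alpha>) {-1..1}"
  proof (rule has_integral_spike_finite[where S = "{-1, 1}", rotated 2])
    fix x assume "x \<in> {-1..1::real} - {-1, 1}"
    then show "complex_of_real (1 - x\<^sup>2) powr (l - 1/2) * complex_of_real (1 - x) powr \<alpha> * gegenbauer l n x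
                 = (-1) ^ n * (gegenbauer_weight l \<alpha> (- x) * gegenbauer_poly l n (of_real (- x)))"
      by (intro gegenbauer_integrand_one_minus) auto
  qed simp
  then show ?thesis unfolding gegenbauer_coeff_def by (simp add: integral_unique)
qed

theorem lemmaA1:
  fixes \<alpha> l :: complex
  assumes "Re \<alpha> > -1/2" and "\<alpha> \<notin> \<int>"
    and "l \<noteq> 0" and "Re l > -1/2" and "Re (l + \<alpha>) > -1/2"
  shows "\<forall>n::nat.
     (let K = 2 powr (4*l + \<alpha> - 1) * (Gamma l)^2 * Gamma (\<alpha> + l + 1/2) * Gamma (l + 1/2)
              * Gamma (\<alpha> + 1) * (of_nat n + l)
              / (complex_of_real pi * Gamma (2*l) * Gamma (\<alpha> - of_nat n + 1)
                 * Gamma (\<alpha> + 2*l + of_nat n + 1))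
      in gegenbauer_coeff l (\<lambda>x. complex_of_real (1 - x) powr \<alpha>) n = (-1)^n * K
       \<and> gegenbauer_coeff l (\<lambda>x. complex_of_real (1 + x) powr \<alpha>) n = K)"
  unfolding Let_def gegenbauer_coeff_one_minus_powr[OF assms(4,5)] gegenbauer_coeff_one_plus_powr[OF assms(4,5)]
    gegenbauer_moment_div_gegenbauer_h[OF assms(2-5)]
  by simp

end
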